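(* Let $p$ be a prime and let $n,m,N\in\mathbb{N}$ with $0<n\le m<N/3$. Then $n\mid_p m$ if and only if there exists $\alpha\in\mathbb{F}_p[t]/(t^N)$ such that $$\alpha^p(t^n-t^m)=t^nt^m(1-\alpha^{p-1}) \quad\text{and}\quad \alpha^{3p}\neq 0 \quad\text{in } \mathbb{F}_p[t]/(t^N).$$
   Context: For $n,m\in\mathbb{N}$, $n\mid_p m$ means $m=p^s n$ for some $s\in\mathbb{N}$. *)

theory Defs
  imports "HOL-Computational_Algebra.Computational_Algebra" "HOL-Library.Cardinality"
begin

definition pdvd :: "nat \<Rightarrow> nat \<Rightarrow> nat \<Rightarrow> bool" where
  "pdvd p n m \<longleftrightarrow> (\<exists>s::nat. m = p ^ s * n)"

text \<open>Equality in the quotient ring k[t]/(t^N), on polynomial representatives.\<close>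
definition eq_mod_tN :: "nat \<Rightarrow> 'a::comm_ring_1 poly \<Rightarrow> 'a poly \<Rightarrow> bool" where
  "eq_mod_tN N a b \<longleftrightarrow> [:0, 1:] ^ N dvd (a - b)"

end

theory Submission
  imports Defs "HOL-Number_Theory.Cong"
begin

text \<open>
  Write \<open>t\<close> for the variable and compute modulo \<open>t\<^sup>N\<close>; only the characteristic \<open>p\<close>
  of the field matters. If \<open>m = p\<^sup>r\<^sup>+\<^sup>1 n\<close>, put \<open>e = p\<^sup>r n\<close> and
  \<open>v = \<Sum>\<^sub>i\<^sub>\<le>\<^sub>r t\<^bsup>e - p\<^sup>i n\<^esup>\<close>, a unit. By the Frobenius identity
  \<open>t\<^sup>n v\<^sup>p - t\<^bsup>n + e(p - 1)\<^esup> v\<close> telescopes to \<open>t\<^sup>n - t\<^sup>m\<close>, which says exactly that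
  \<open>\<alpha> = t\<^sup>e / v\<close> is a solution; \<open>\<alpha>\<^bsup>3p\<^esup>\<close> has order \<open>3m < N\<close>.

  Conversely write \<open>\<alpha> = t\<^sup>a u\<close> with \<open>u\<close> a unit and \<open>w = u\<^sup>-\<^sup>1\<close>. Multiplying the equation by
  \<open>w\<^sup>p\<close> gives \<open>t\<^bsup>ap + n\<^esup> - t\<^bsup>ap + m\<^esup> = t\<^bsup>n + m\<^esup> w\<^sup>p - t\<^bsup>n + m + a(p - 1)\<^esup> w\<close>.
  The lowest coefficients force \<open>m = ap\<close>, and the coefficient of \<open>t\<^bsup>n + 2m - k\<^esup>\<close> shows that for
  \<open>0 < k \<le> a\<close>, \<open>k \<noteq> n\<close>, the coefficient \<open>w\<^sub>a\<^sub>-\<^sub>k\<close> can only be nonzero if \<open>p\<close> divides \<open>k\<close>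
  and \<open>w\<^bsub>a - k/p\<^esub> \<noteq> 0\<close>. Descending from \<open>w\<^sub>0 \<noteq> 0\<close>, i.e. \<open>k = a\<close>, this can only stop at
  \<open>k = n\<close>, so \<open>a = p\<^sup>i n\<close>.
\<close>

lemma X_power_eq_monom: "[:0, 1:] ^ k = (monom 1 k :: 'a::comm_ring_1 poly)"
  by (simp add: monom_altdef)

lemma eq_mod_tN_iff_cong: "eq_mod_tN N a b \<longleftrightarrow> [a = b] (mod monom 1 N)"
  for a b :: "'a::field poly"
  by (simp add: eq_mod_tN_def cong_iff_dvd_diff X_power_eq_monom)

lemma cong_monom_iff_coeff: "[a = b] (mod monom 1 N) \<longleftrightarrow> (\<forall>j<N. coeff a j = coeff b j)"
  for a b :: "'a::field poly"
  by (simp add: cong_iff_dvd_diff monom_1_dvd_iff')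

lemma cong_monom_inverse:
  fixes v :: "'a::field poly"
  assumes "coeff v 0 \<noteq> 0"
  obtains w where "[v * w = 1] (mod monom 1 N)"
proof
  define c where "c = coeff v 0"
  define y where "y = 1 - smult (inverse c) v"
  have "coeff y 0 = 0"
    using assms by (simp add: y_def c_def)
  then have "monom 1 1 dvd y"
    by (simp add: monom_1_dvd_iff')
  then have "monom 1 N dvd y ^ N"
    by (metis dvd_power_same monom_power mult_1 power_one)
  moreover have "v * smult (inverse c) (\<Sum>i<N. y ^ i) = 1 - y ^ N"
    using assms by (simp add: y_def c_def one_diff_power_eq mult_smult_right mult_smult_left)
  ultimately show "[v * smult (inverse c) (\<Sum>i<N. y ^ i) = 1] (mod monom 1 N)"
    by (simp add: cong_iff_dvd_diff)
qed

lemma coeff_0_cong_inverse: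
  fixes v w :: "'a::field poly"
  assumes "[v * w = 1] (mod monom 1 N)" and "0 < N"
  shows "coeff w 0 \<noteq> 0"
proof -
  have "coeff (v * w) 0 = coeff 1 0"
    using assms unfolding cong_monom_iff_coeff by blast
  then show ?thesis
    by (auto simp: coeff_mult_0)
qed

lemma cong_mult_cancel_unit:
  fixes v x y :: "'a::field poly"
  assumes "[v * x = v * y] (mod monom 1 N)" and "coeff v 0 \<noteq> 0"
  shows "[x = y] (mod monom 1 N)"
proof -
  obtain w where vw: "[v * w = 1] (mod monom 1 N)"
    using cong_monom_inverse assms(2) by blast
  have "[x = v * w * x] (mod monom 1 N)"
    using cong_mult[OF vw cong_refl[of x]] by (simp add: cong_sym_eq)
  also have "v * w * x = w * (v * x)"
    by (simp add: ac_simps)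
  also have "[w * (v * x) = w * (v * y)] (mod monom 1 N)"
    using assms(1) by (rule cong_scalar_left)
  also have "w * (v * y) = v * w * y"
    by (simp add: ac_simps)
  also have "[v * w * y = y] (mod monom 1 N)"
    using cong_mult[OF vw cong_refl[of y]] by simp
  finally show ?thesis .
qed

lemma poly_eq_monom_mult_unit:
  fixes \<alpha> :: "'a::idom poly"
  assumes "\<alpha> \<noteq> 0"
  obtains a u where "\<alpha> = monom 1 a * u" and "coeff u 0 \<noteq> 0"
proof -
  obtain u where "\<alpha> = [:0, 1:] ^ order 0 \<alpha> * u" and "\<not> [:0, 1:] dvd u"
    using order_decomp[OF assms, of 0] by auto
  then show ?thesis
    using that by (simp add: X_power_eq_monom dvd_iff_poly_eq_0 poly_0_coeff_0)
qed

lemma of_nat_CARD_eq_0: "of_nat CARD('a::{finite,ring_1}) = (0::'a)"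
proof -
  have "(\<Sum>x\<in>UNIV. x) = (\<Sum>x\<in>UNIV. x + (1::'a))"
    by (rule sum.reindex_bij_witness[of _ "\<lambda>y. y + 1" "\<lambda>y. y - 1"]) auto
  then show ?thesis
    by (simp add: sum.distrib)
qed

lemma CHAR_eq_prime_CARD:
  assumes "prime CARD('a::{finite,ring_1})"
  shows "CHAR('a) = CARD('a)"
proof -
  have "CHAR('a) dvd CARD('a)"
    using of_nat_CARD_eq_0[where 'a='a] by (simp add: of_nat_eq_0_iff_char_dvd)
  then show ?thesis
    using CHAR_not_1[where 'a='a] assms prime_nat_iff by auto
qed

lemma coeff_power_CHAR:
  fixes w :: "'a::comm_semiring_1 poly"
  assumes "prime p" and "CHAR('a) = p"
  shows "coeff (w ^ p) j = (if p dvd j then coeff w (j div p) ^ p else 0)"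
proof -
  have "w ^ p = (\<Sum>i\<le>degree w. monom (coeff w i) i) ^ p"
    by (simp add: poly_as_sum_of_monoms)
  also have "\<dots> = (\<Sum>i\<le>degree w. monom (coeff w i ^ p) (i * p))"
    using assms by (subst freshmans_dream_sum) (simp_all add: monom_power)
  finally have "coeff (w ^ p) j = (\<Sum>i\<le>degree w. if i * p = j then coeff w i ^ p else 0)"
    by (simp add: coeff_sum coeff_monom)
  also have "\<dots> = (if p dvd j then coeff w (j div p) ^ p else 0)"
  proof (cases "p dvd j")
    case True
    then have "(\<Sum>i\<le>degree w. if i * p = j then coeff w i ^ p else 0)
        = (\<Sum>i\<le>degree w. if j div p = i then coeff w i ^ p else 0)"
      using prime_gt_0_nat[OF assms(1)] by (intro sum.cong) auto
    with True show ?thesis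
      using prime_gt_0_nat[OF assms(1)] by (simp add: coeff_eq_0 zero_power)
  qed (auto intro!: sum.neutral)
  finally show ?thesis .
qed

lemma monom_frobenius_telescope:
  fixes p r n :: nat
  assumes "prime p" and "CHAR('a::comm_ring_1) = p"
  defines "v \<equiv> (\<Sum>i\<le>r. monom 1 (p ^ r * n - p ^ i * n) :: 'a poly)"
  shows "monom 1 n * (v ^ p - monom 1 (p ^ r * n * (p - 1)) * v) = monom 1 n - monom 1 (p ^ Suc r * n)"
proof -
  define f :: "nat \<Rightarrow> 'a poly" where "f i = monom 1 (p ^ Suc r * n + n - p ^ i * n)" for i
  have "1 \<le> p"
    using prime_gt_0_nat[OF assms(1)] by simp
  then have le: "p ^ i * n \<le> p ^ r * n" if "i \<le> r" for i
    using that by (simp add: power_increasing)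
  have "monom 1 n * v ^ p = (\<Sum>i\<le>r. monom 1 n * monom 1 ((p ^ r * n - p ^ i * n) * p))"
    using assms by (simp add: v_def freshmans_dream_sum monom_power sum_distrib_left)
  also have "\<dots> = (\<Sum>i\<le>r. f (Suc i))"
  proof (rule sum.cong)
    fix i assume "i \<in> {..r}"
    then have "p * (p ^ i * n) \<le> p * (p ^ r * n)"
      using le[of i] by simp
    moreover have "(p ^ r * n - p ^ i * n) * p = p * (p ^ r * n) - p * (p ^ i * n)"
      by (subst mult.commute) (rule diff_mult_distrib2)
    ultimately have "n + (p ^ r * n - p ^ i * n) * p = p ^ Suc r * n + n - p ^ Suc i * n"
      by (simp add: mult_ac)
    then show "monom 1 n * monom 1 ((p ^ r * n - p ^ i * n) * p) = f (Suc i)"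
      by (simp add: f_def mult_monom)
  qed simp
  finally have frob: "monom 1 n * v ^ p = (\<Sum>i\<le>r. f (Suc i))" .
  have "monom 1 n * (monom 1 (p ^ r * n * (p - 1)) * v) = (\<Sum>i\<le>r. f i)"
    unfolding v_def sum_distrib_left
  proof (rule sum.cong)
    fix i assume "i \<in> {..r}"
    then have "p ^ i * n \<le> p ^ r * n"
      using le by simp
    moreover have "p ^ Suc r * n = p ^ r * n * (p - 1) + p ^ r * n"
      using \<open>1 \<le> p\<close> by (cases p) (simp_all add: algebra_simps)
    ultimately have "n + (p ^ r * n * (p - 1) + (p ^ r * n - p ^ i * n)) = p ^ Suc r * n + n - p ^ i * n"
      by linarith
    then show "monom 1 n * (monom 1 (p ^ r * n * (p - 1)) * monom 1 (p ^ r * n - p ^ i * n)) = f i"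
      by (simp add: f_def mult_monom)
  qed simp
  with frob have "monom 1 n * (v ^ p - monom 1 (p ^ r * n * (p - 1)) * v) = (\<Sum>i<Suc r. f (Suc i) - f i)"
    by (simp add: right_diff_distrib sum_subtractf lessThan_Suc_atMost)
  also have "\<dots> = monom 1 n - monom 1 (p ^ Suc r * n)"
    unfolding sum_lessThan_telescope by (simp add: f_def)
  finally show ?thesis .
qed

definition solves_mod_tN :: "nat \<Rightarrow> nat \<Rightarrow> nat \<Rightarrow> nat \<Rightarrow> 'a::field poly \<Rightarrow> bool" where
  "solves_mod_tN N p n m \<alpha> \<longleftrightarrow>
    [\<alpha> ^ p * (monom 1 n - monom 1 m) = monom 1 n * monom 1 m * (1 - \<alpha> ^ (p - 1))] (mod monom 1 N)"

text \<open>The equation for \<open>\<alpha> = t\<^sup>a u\<close>, with \<open>u\<close> a unit, after multiplication by \<open>w\<^sup>p\<close> where \<open>w = u\<^sup>-\<^sup>1\<close>.\<close>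

definition reduced_solves_mod_tN :: "nat \<Rightarrow> nat \<Rightarrow> nat \<Rightarrow> nat \<Rightarrow> nat \<Rightarrow> 'a::field poly \<Rightarrow> bool" where
  "reduced_solves_mod_tN N p n m a w \<longleftrightarrow>
    [monom 1 (a * p + n) - monom 1 (a * p + m)
      = monom 1 (n + m) * w ^ p - monom 1 (n + m + a * (p - 1)) * w] (mod monom 1 N)"

lemma solves_mod_tN_monom_mult_inverse:
  fixes v w :: "'a::field poly"
  assumes "0 < p" and "m = e * p"
    and telescope: "monom 1 n * (v ^ p - monom 1 (e * (p - 1)) * v) = monom 1 n - monom 1 m"
    and vw: "[v * w = 1] (mod monom 1 N)" and "coeff v 0 \<noteq> 0"
  shows "solves_mod_tN N p n m (monom 1 e * w)"
  unfolding solves_mod_tN_def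
proof (rule cong_mult_cancel_unit)
  define \<alpha> where "\<alpha> = monom 1 e * w"
  have unit_power: "[(v * w) ^ k = 1] (mod monom 1 N)" for k
    using cong_pow[OF vw, of k] by simp
  have "v ^ p * (\<alpha> ^ p * (monom 1 n - monom 1 m)) = monom 1 m * (v * w) ^ p * (monom 1 n - monom 1 m)"
    by (simp add: \<alpha>_def \<open>m = e * p\<close> power_mult_distrib monom_power mult_ac)
  also have "[\<dots> = monom 1 m * 1 * (monom 1 n - monom 1 m)] (mod monom 1 N)"
    by (intro cong_mult cong_refl unit_power)
  also have "monom 1 m * 1 * (monom 1 n - monom 1 m)
      = monom 1 n * monom 1 m * (v ^ p - monom 1 (e * (p - 1)) * v * 1)"
    by (simp flip: telescope add: mult_ac)
  also have "[monom 1 n * monom 1 m * (v ^ p - monom 1 (e * (p - 1)) * v * 1)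
      = monom 1 n * monom 1 m * (v ^ p - monom 1 (e * (p - 1)) * v * (v * w) ^ (p - 1))] (mod monom 1 N)"
    by (intro cong_mult cong_diff cong_refl cong_sym[OF unit_power])
  also have "monom 1 n * monom 1 m * (v ^ p - monom 1 (e * (p - 1)) * v * (v * w) ^ (p - 1))
      = v ^ p * (monom 1 n * monom 1 m * (1 - \<alpha> ^ (p - 1)))"
  proof -
    have "v ^ p = v * v ^ (p - 1)"
      using \<open>0 < p\<close> by (simp flip: power_Suc)
    then show ?thesis
      by (simp add: \<alpha>_def power_mult_distrib monom_power algebra_simps)
  qed
  finally show "[v ^ p * (\<alpha> ^ p * (monom 1 n - monom 1 m))
      = v ^ p * (monom 1 n * monom 1 m * (1 - \<alpha> ^ (p - 1)))] (mod monom 1 N)" .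
qed (simp add: coeff_0_power \<open>coeff v 0 \<noteq> 0\<close>)

lemma solution_of_pdvd:
  fixes p n m N :: nat
  assumes p: "prime p" "CHAR('a) = p" and "0 < n" and "pdvd p n m" and "3 * m < N"
  obtains \<alpha> :: "'a::field poly" where "solves_mod_tN N p n m \<alpha>" and "\<not> [\<alpha> ^ (3 * p) = 0] (mod monom 1 N)"
proof -
  obtain s where m: "m = p ^ s * n"
    using assms(4) unfolding pdvd_def by blast
  show ?thesis
  proof (cases s)
    case 0
    then show ?thesis
      using that[of 1] m \<open>3 * m < N\<close> by (auto simp: solves_mod_tN_def cong_monom_iff_coeff)
  next
    case (Suc r)
    define e where "e = p ^ r * n"
    define v :: "'a poly" where "v = (\<Sum>i\<le>r. monom 1 (e - p ^ i * n))"
    have "1 < p"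
      using prime_gt_1_nat[OF p(1)] .
    have me: "m = e * p"
      using m Suc by (simp add: e_def)
    have coeff_term: "coeff (monom 1 (e - p ^ i * n) :: 'a poly) 0 = (if i = r then 1 else 0)"
      if "i \<le> r" for i
    proof (cases "i = r")
      case False
      with that have "p ^ i * n < e"
        using \<open>1 < p\<close> \<open>0 < n\<close> by (simp add: e_def power_strict_increasing)
      with False show ?thesis
        by (simp add: coeff_monom)
    qed (simp add: e_def)
    have "coeff v 0 = (\<Sum>i\<le>r. if i = r then 1 else 0)"
      unfolding v_def coeff_sum by (intro sum.cong refl coeff_term) simp
    then have v0: "coeff v 0 = 1"
      by simp
    then obtain w where vw: "[v * w = 1] (mod monom 1 N)"
      using cong_monom_inverse[of v N] by auto
    show ?thesis
    proof (rule that)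
      show "solves_mod_tN N p n m (monom 1 e * w)"
      proof (rule solves_mod_tN_monom_mult_inverse[OF _ me _ vw])
        show "monom 1 n * (v ^ p - monom 1 (e * (p - 1)) * v) = monom 1 n - monom 1 m"
          using monom_frobenius_telescope[OF p, where r = r and n = n] m Suc by (simp add: v_def e_def)
      qed (use \<open>1 < p\<close> v0 in simp_all)
    next
      have "(monom 1 e * w) ^ (3 * p) = monom 1 (3 * m) * w ^ (3 * p)"
        by (simp add: me power_mult_distrib monom_power mult_ac)
      then have "coeff ((monom 1 e * w) ^ (3 * p)) (3 * m) = coeff w 0 ^ (3 * p)"
        by (simp add: coeff_monom_mult coeff_0_power)
      moreover have "coeff w 0 \<noteq> 0"
        using coeff_0_cong_inverse[OF vw] \<open>3 * m < N\<close> by simp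
      ultimately show "\<not> [(monom 1 e * w) ^ (3 * p) = 0] (mod monom 1 N)"
        using \<open>3 * m < N\<close> by (auto simp: cong_monom_iff_coeff)
    qed
  qed
qed

lemma solves_mod_tN_imp_reduced:
  fixes \<alpha> :: "'a::field poly" and p n m N :: nat
  assumes "0 < p" and "0 < N" and "\<alpha> \<noteq> 0"
    and "solves_mod_tN N p n m \<alpha>"
  obtains a and w :: "'a poly" where "reduced_solves_mod_tN N p n m a w" and "coeff w 0 \<noteq> 0"
proof -
  obtain a u where \<alpha>: "\<alpha> = monom 1 a * u" and u0: "coeff u 0 \<noteq> 0"
    using poly_eq_monom_mult_unit[OF assms(3)] by blast
  obtain w where uw: "[u * w = 1] (mod monom 1 N)"
    using u0 cong_monom_inverse[of u N] by auto
  have unit_power: "[1 = (u * w) ^ k] (mod monom 1 N)" for k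
    using cong_pow[OF uw, of k] by (simp add: cong_sym_eq)
  have u_power: "u ^ p = u ^ (p - 1) * u"
    using \<open>0 < p\<close> by (simp flip: power_Suc2)
  show ?thesis
  proof (rule that)
    have "u ^ p * (monom 1 (a * p + n) - monom 1 (a * p + m)) = \<alpha> ^ p * (monom 1 n - monom 1 m)"
      by (simp add: \<alpha> power_mult_distrib monom_power mult_monom algebra_simps)
    also have "[\<alpha> ^ p * (monom 1 n - monom 1 m) = monom 1 n * monom 1 m * (1 - \<alpha> ^ (p - 1))] (mod monom 1 N)"
      using assms(4) by (simp add: solves_mod_tN_def)
    also have "monom 1 n * monom 1 m * (1 - \<alpha> ^ (p - 1))
        = monom 1 (n + m) * (1 - monom 1 (a * (p - 1)) * u ^ (p - 1) * 1)"
      by (simp add: \<alpha> power_mult_distrib monom_power mult_monom)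
    also have "[monom 1 (n + m) * (1 - monom 1 (a * (p - 1)) * u ^ (p - 1) * 1)
        = monom 1 (n + m) * ((u * w) ^ p - monom 1 (a * (p - 1)) * u ^ (p - 1) * (u * w) ^ 1)] (mod monom 1 N)"
      by (intro cong_mult cong_diff cong_refl unit_power)
    also have "monom 1 (n + m) * ((u * w) ^ p - monom 1 (a * (p - 1)) * u ^ (p - 1) * (u * w) ^ 1)
        = u ^ p * (monom 1 (n + m) * w ^ p - monom 1 (n + m + a * (p - 1)) * w)"
      by (simp add: u_power power_mult_distrib mult_monom algebra_simps)
    finally show "reduced_solves_mod_tN N p n m a w"
      unfolding reduced_solves_mod_tN_def by (rule cong_mult_cancel_unit) (simp add: coeff_0_power u0)
  next
    show "coeff w 0 \<noteq> 0"
      using coeff_0_cong_inverse[OF uw \<open>0 < N\<close>] .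
  qed
qed

lemma coeff_reduced_solves_mod_tN:
  fixes w :: "'a::field poly"
  assumes "reduced_solves_mod_tN N p n m a w" and "j < N"
  shows "(if j = a * p + n then 1 else 0) - (if j = a * p + m then 1 else 0)
    = (if j < n + m then 0 else coeff (w ^ p) (j - (n + m)))
      - (if j < n + m + a * (p - 1) then 0 else coeff w (j - (n + m + a * (p - 1))))"
  using assms unfolding reduced_solves_mod_tN_def cong_monom_iff_coeff by (auto simp: coeff_monom_mult coeff_monom)

lemma reduced_solves_mod_tN_exponent:
  fixes w :: "'a::field poly"
  assumes H: "reduced_solves_mod_tN N p n m a w"
    and "coeff w 0 \<noteq> 0" and "1 < p" and "n < m" and "n + m < N"
  shows "m = a * p"
proof (rule ccontr)
  assume "m \<noteq> a * p"
  then consider "a * p < m" | "m < a * p"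
    by linarith
  then show False
  proof cases
    case 1
    then show False
      using coeff_reduced_solves_mod_tN[OF H, of "a * p + n"] \<open>n < m\<close> \<open>n + m < N\<close> by simp
  next
    case 2
    then have "0 < a * (p - 1)"
      using \<open>1 < p\<close> by (cases a) auto
    then show False
      using coeff_reduced_solves_mod_tN[OF H, of "n + m"] 2 \<open>n < m\<close> \<open>n + m < N\<close> \<open>coeff w 0 \<noteq> 0\<close>
      by (simp add: coeff_0_power)
  qed
qed

lemma reduced_solves_mod_tN_descent:
  fixes w :: "'a::field poly"
  assumes p: "prime p" "CHAR('a) = p"
    and H: "reduced_solves_mod_tN N p n m a w"
    and m: "m = a * p" and "n + 2 * m < N"
    and k: "0 < k" "k \<le> a" "k \<noteq> n" and "coeff w (a - k) \<noteq> 0"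
  shows "p dvd k \<and> coeff w (a - k div p) \<noteq> 0"
proof -
  have "1 < p"
    using prime_gt_1_nat[OF p(1)] .
  have "a < m"
    using k \<open>1 < p\<close> m by simp
  define j where "j = n + m + (m - k)"
  have "a * (p - 1) = m - a"
    using m by (simp add: diff_mult_distrib2)
  then have "j < N" "j \<noteq> m + n" "j \<noteq> m + m" "\<not> j < n + m" "\<not> j < n + m + a * (p - 1)"
      "j - (n + m) = m - k" "j - (n + m + a * (p - 1)) = a - k"
    using k \<open>a < m\<close> \<open>n + 2 * m < N\<close> by (auto simp: j_def)
  then have "coeff (w ^ p) (m - k) = coeff w (a - k)"
    using coeff_reduced_solves_mod_tN[OF H, of j] unfolding m[symmetric] by simp
  then have "p dvd m - k" and "coeff w ((m - k) div p) \<noteq> 0"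
    using \<open>coeff w (a - k) \<noteq> 0\<close> \<open>1 < p\<close> by (auto simp: coeff_power_CHAR[OF p] zero_power split: if_splits)
  moreover from this(1) have "p dvd k"
    using m k \<open>a < m\<close> by (metis diff_diff_cancel dvd_diff_nat dvd_triv_right less_imp_le order_trans)
  moreover from this obtain q where "k = q * p"
    by (metis dvdE mult.commute)
  then have "(m - k) div p = a - k div p"
    using m prime_gt_0_nat[OF p(1)] by (simp flip: diff_mult_distrib)
  ultimately show ?thesis
    by simp
qed

lemma power_mult_by_descent:
  fixes p n a k :: nat
  assumes "1 < p"
    and descent: "\<And>k. 0 < k \<Longrightarrow> k \<le> a \<Longrightarrow> P k \<Longrightarrow> k \<noteq> n \<Longrightarrow> p dvd k \<and> P (k div p)"
    and "0 < k" and "k \<le> a" and "P k"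
  shows "\<exists>i. k = p ^ i * n"
  using assms(3-5)
proof (induction k rule: less_induct)
  case (less k)
  show ?case
  proof (cases "k = n")
    case False
    then have "p dvd k" and "P (k div p)"
      using descent less.prems by auto
    then obtain q where k: "k = p * q" and "P q"
      using \<open>1 < p\<close> by (auto elim: dvdE)
    moreover have "0 < q" and "q < k"
      using k less.prems(1) \<open>1 < p\<close> by auto
    moreover from this have "q \<le> a"
      using less.prems(2) by simp
    ultimately obtain i where "q = p ^ i * n"
      using less.IH by blast
    with k show ?thesis
      by (intro exI[of _ "Suc i"]) simp
  qed (intro exI[of _ 0], simp)
qed

lemma pdvd_of_solution:
  fixes p n m N :: nat and \<alpha> :: "'a::field poly"
  assumes p: "prime p" "CHAR('a) = p" and "0 < n" and "n \<le> m" and "3 * m < N"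
    and eq: "solves_mod_tN N p n m \<alpha>"
    and "\<alpha> \<noteq> 0"
  shows "pdvd p n m"
proof (cases "n = m")
  case True
  then show ?thesis
    unfolding pdvd_def by (intro exI[of _ 0]) simp
next
  case False
  have "1 < p"
    using prime_gt_1_nat[OF p(1)] .
  obtain a and w :: "'a poly" where H: "reduced_solves_mod_tN N p n m a w"
    and w0: "coeff w 0 \<noteq> 0"
    by (rule solves_mod_tN_imp_reduced[OF _ _ \<open>\<alpha> \<noteq> 0\<close> eq]) (use \<open>1 < p\<close> \<open>3 * m < N\<close> in auto)
  have m: "m = a * p"
    using reduced_solves_mod_tN_exponent[OF H w0 \<open>1 < p\<close>] False \<open>n \<le> m\<close> \<open>3 * m < N\<close> by simp
  have "0 < a"
    using m False \<open>n \<le> m\<close> \<open>0 < n\<close> by (cases a) auto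
  have "\<exists>i. a = p ^ i * n"
  proof (rule power_mult_by_descent[where P = "\<lambda>k. coeff w (a - k) \<noteq> 0"])
    show "p dvd k \<and> coeff w (a - k div p) \<noteq> 0"
      if "0 < k" "k \<le> a" "coeff w (a - k) \<noteq> 0" "k \<noteq> n" for k
      using reduced_solves_mod_tN_descent[OF p H m] that \<open>3 * m < N\<close> \<open>n \<le> m\<close> by simp
  qed (use \<open>1 < p\<close> \<open>0 < a\<close> w0 in simp_all)
  then obtain i where "a = p ^ i * n" ..
  then show ?thesis
    unfolding pdvd_def m by (intro exI[of _ "Suc i"]) simp
qed

theorem mainTheorem6:
  fixes p n m N :: nat
  assumes "prime p"
    and "CARD('a) = p"
    and "0 < n" and "n \<le> m" and "3 * m < N"
  shows "pdvd p n m \<longleftrightarrow>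
    (\<exists>\<alpha> :: 'a::{finite,field} poly.
       eq_mod_tN N (\<alpha> ^ p * ([:0, 1:] ^ n - [:0, 1:] ^ m))
                   ([:0, 1:] ^ n * [:0, 1:] ^ m * (1 - \<alpha> ^ (p - 1)))
     \<and> \<not> eq_mod_tN N (\<alpha> ^ (3 * p)) 0)"
proof -
  have char: "CHAR('a) = p"
    using CHAR_eq_prime_CARD[where 'a='a] assms(1,2) by simp
  have "\<alpha> \<noteq> 0" if "\<not> [\<alpha> ^ (3 * p) = 0] (mod monom 1 N)" for \<alpha> :: "'a poly"
    using that prime_gt_0_nat[OF assms(1)] by (auto simp: zero_power)
  then show ?thesis
    unfolding X_power_eq_monom eq_mod_tN_iff_cong solves_mod_tN_def[symmetric]
    using solution_of_pdvd[OF assms(1) char assms(3) _ assms(5)]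
      pdvd_of_solution[OF assms(1) char assms(3-5)] by metis
qed

end
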